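(* Let $\alpha\in(0,1)$, $R>0$, and consider the initial state $(x_O,y_O,y_T)$ at time $0$. Let $C=\{(x,y):(x-x_O)^2+(y-y_O)^2=R^2\}$ be the boundary of the observation disk and $\mathrm{DL}=\{(\pm s\alpha,\,y_T+s\sqrt{1-\alpha^2}):s\ge0\}$ the Decision Line. If $C\cap\mathrm{DL}$ consists of exactly two points, then the state belongs to $\mathscr B_2\cup\mathscr B_3$; consequently the optimal observation time is non-zero.
   Context: Target: position $(0,y_T(t))$, $\dot y_T=1$, $y_T(0)=y_T$. Observer: position $(x_O(t),y_O(t))$ starting at $(x_O,y_O)$, $\dot x_O=\alpha\cos\psi(t)$, $\dot y_O=\alpha\sin\psi(t)$, heading $\psi:[0,\infty)\to\mathbb R$ a measurable control. Observation disk: closed disk of radius $R$ centered at the observer. For a control, $t_2=\inf\{t\ge0:x_O(t)^2+(y_O(t)-y_T(t))^2\le R^2\}$, $t_f=\inf\{t\ge t_2:x_O(t)^2+(y_O(t)-y_T(t))^2>R^2\}$, and $t_{\text{obs}}=t_f-t_2$ (taken to be $0$ if no contact occurs). The optimal observation time $t^*_{\text{obs}}$ is the supremum of $t_{\text{obs}}$ over all controls. The Decision Line is the set of points $Z$ whose Apollonius circle $\{P:|PZ|=\alpha|PT|\}$ with the initial target position $T=(0,y_T)$ is tangent to the target's path $\{(0,y):y\ge y_T\}$, which is the union of the two rays given. $\mathscr B_1=\{t^*_{\text{obs}}=0\}$, $\mathscr B_3=\{t^*_{\text{obs}}=2R/(1-\alpha)\}$, $\mathscr B_2=\{0<t^*_{\text{obs}}<2R/(1-\alpha)\}$.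 *)

theory Defs
  imports "HOL-Analysis.Analysis"
begin

definition obs_x :: "real \<Rightarrow> (real \<Rightarrow> real) \<Rightarrow> real \<Rightarrow> real \<Rightarrow> real" where
  "obs_x \<alpha> \<psi> xO t = xO + (LINT s:{0..t}|lborel. \<alpha> * cos (\<psi> s))"

definition obs_y :: "real \<Rightarrow> (real \<Rightarrow> real) \<Rightarrow> real \<Rightarrow> real \<Rightarrow> real" where
  "obs_y \<alpha> \<psi> yO t = yO + (LINT s:{0..t}|lborel. \<alpha> * sin (\<psi> s))"

definition sqdist_OT :: "real \<Rightarrow> (real \<Rightarrow> real) \<Rightarrow> real \<Rightarrow> real \<Rightarrow> real \<Rightarrow> real \<Rightarrow> real" where
  "sqdist_OT \<alpha> \<psi> xO yO yT t =
     (obs_x \<alpha> \<psi> xO t)\<^sup>2 + (obs_y \<alpha> \<psi> yO t - (yT + t))\<^sup>2"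

definition t2_time :: "real \<Rightarrow> real \<Rightarrow> (real \<Rightarrow> real) \<Rightarrow> real \<Rightarrow> real \<Rightarrow> real \<Rightarrow> real" where
  "t2_time \<alpha> R \<psi> xO yO yT = Inf {t. 0 \<le> t \<and> sqdist_OT \<alpha> \<psi> xO yO yT t \<le> R\<^sup>2}"

definition tf_time :: "real \<Rightarrow> real \<Rightarrow> (real \<Rightarrow> real) \<Rightarrow> real \<Rightarrow> real \<Rightarrow> real \<Rightarrow> real" where
  "tf_time \<alpha> R \<psi> xO yO yT =
     Inf {t. t2_time \<alpha> R \<psi> xO yO yT \<le> t \<and> sqdist_OT \<alpha> \<psi> xO yO yT t > R\<^sup>2}"

definition t_obs :: "real \<Rightarrow> real \<Rightarrow> (real \<Rightarrow> real) \<Rightarrow> real \<Rightarrow> real \<Rightarrow> real \<Rightarrow> real" where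
  "t_obs \<alpha> R \<psi> xO yO yT =
     (if {t. 0 \<le> t \<and> sqdist_OT \<alpha> \<psi> xO yO yT t \<le> R\<^sup>2} = {} then 0
      else tf_time \<alpha> R \<psi> xO yO yT - t2_time \<alpha> R \<psi> xO yO yT)"

definition opt_obs :: "real \<Rightarrow> real \<Rightarrow> real \<Rightarrow> real \<Rightarrow> real \<Rightarrow> real" where
  "opt_obs \<alpha> R xO yO yT =
     Sup {t_obs \<alpha> R \<psi> xO yO yT | \<psi>. \<psi> \<in> borel_measurable lborel}"

definition B1 :: "real \<Rightarrow> real \<Rightarrow> (real \<times> real \<times> real) set" where
  "B1 \<alpha> R = {(xO, yO, yT). opt_obs \<alpha> R xO yO yT = 0}"

definition B2 :: "real \<Rightarrow> real \<Rightarrow> (real \<times> real \<times> real) set" where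
  "B2 \<alpha> R = {(xO, yO, yT). 0 < opt_obs \<alpha> R xO yO yT \<and> opt_obs \<alpha> R xO yO yT < 2 * R / (1 - \<alpha>)}"

definition B3 :: "real \<Rightarrow> real \<Rightarrow> (real \<times> real \<times> real) set" where
  "B3 \<alpha> R = {(xO, yO, yT). opt_obs \<alpha> R xO yO yT = 2 * R / (1 - \<alpha>)}"

definition decision_line :: "real \<Rightarrow> real \<Rightarrow> (real \<times> real) set" where
  "decision_line \<alpha> yT =
     {(x, y). \<exists>s\<ge>0. (x = s * \<alpha> \<or> x = - (s * \<alpha>)) \<and> y = yT + s * sqrt (1 - \<alpha>\<^sup>2)}"

definition obs_circle :: "real \<Rightarrow> real \<Rightarrow> real \<Rightarrow> (real \<times> real) set" where
  "obs_circle R xO yO = {(x, y). (x - xO)\<^sup>2 + (y - yO)\<^sup>2 = R\<^sup>2}"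

end

theory Submission
  imports Defs
begin

text \<open>
  Upper bound: the target moves at unit speed and the observer at speed \<open>\<alpha>\<close>, so by the triangle
  inequality two instants \<open>u \<le> w\<close> at which the target is within distance \<open>R\<close> satisfy
  \<open>(1 - \<alpha>) (w - u) \<le> 2 R\<close>.

  Lower bound: a point \<open>Z\<close> of the Decision Line is at distance \<open>\<alpha> u\<close> from the target position
  \<open>T(u)\<close> at which its Apollonius circle touches the target's path. If \<open>|O T(t)| \<ge> \<alpha> t + R\<close> for all
  \<open>t \<ge> 0\<close>, then every such \<open>Z\<close> on the observation circle makes the triangle \<open>O Z T(u)\<close> degenerate,
  so \<open>Z\<close> is determined by \<open>u\<close>, and \<open>u\<close> is a zero on \<open>[0, \<infinity>)\<close> of the quadratic
  \<open>|O T(t)|\<^sup>2 - (\<alpha> t + R)\<^sup>2\<close>, which is nonnegative there and so has at most one such zero. Hence two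
  intersection points give a time \<open>t\<close> with \<open>|O T(t)| < \<alpha> t + R\<close>. Heading straight for the target's
  position at a suitable such time brings the target strictly inside the disk, and as the distance
  along a straight motion is convex in time, it stays inside for a positive time.
\<close>

definition obs_pos :: "real \<Rightarrow> (real \<Rightarrow> real) \<Rightarrow> real \<Rightarrow> real \<Rightarrow> real \<Rightarrow> real \<times> real" where
  "obs_pos \<alpha> \<psi> xO yO t = (obs_x \<alpha> \<psi> xO t, obs_y \<alpha> \<psi> yO t)"

definition target_pos :: "real \<Rightarrow> real \<Rightarrow> real \<times> real" where
  "target_pos yT t = (0, yT + t)"

lemma dist_Pair_Pair_power2:
  fixes a b c d :: real
  shows "(dist (a, b) (c, d))\<^sup>2 = (a - c)\<^sup>2 + (b - d)\<^sup>2"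
  by (simp add: dist_Pair_Pair dist_real_def)

lemma dist_target_pos: "dist (target_pos yT s) (target_pos yT t) = \<bar>s - t\<bar>"
  by (simp add: target_pos_def dist_Pair_Pair dist_real_def)

lemma sqdist_OT_eq: "sqdist_OT \<alpha> \<psi> xO yO yT t = (dist (obs_pos \<alpha> \<psi> xO yO t) (target_pos yT t))\<^sup>2"
  by (simp add: sqdist_OT_def obs_pos_def target_pos_def dist_Pair_Pair_power2)

lemma sqdist_OT_le_iff:
  assumes "0 \<le> R"
  shows "sqdist_OT \<alpha> \<psi> xO yO yT t \<le> R\<^sup>2 \<longleftrightarrow> dist (obs_pos \<alpha> \<psi> xO yO t) (target_pos yT t) \<le> R"
  using assms by (simp add: sqdist_OT_eq power_mono_iff)

lemma norm_polar_Pair [simp]: "norm (r * cos x, r * sin x) = \<bar>r\<bar>"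
  by (simp add: norm_Pair power_mult_distrib flip: distrib_left)

lemma set_integrable_heading:
  fixes \<psi> :: "real \<Rightarrow> real"
  assumes [measurable]: "\<psi> \<in> borel_measurable lborel"
  shows "set_integrable lborel {a..b} (\<lambda>s. (c * cos (\<psi> s), c * sin (\<psi> s)))"
proof (rule set_integrable_bound)
  show "set_integrable lborel {a..b} (\<lambda>_. \<bar>c\<bar>)"
    by (rule borel_integrable_atLeastAtMost') simp
  show "set_borel_measurable lborel {a..b} (\<lambda>s. (c * cos (\<psi> s), c * sin (\<psi> s)))"
    unfolding set_borel_measurable_def by measurable
  show "AE s in lborel. s \<in> {a..b} \<longrightarrow> norm (c * cos (\<psi> s), c * sin (\<psi> s)) \<le> norm \<bar>c\<bar>"
    by simp
qed

lemma obs_pos_integral: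
  assumes "\<psi> \<in> borel_measurable lborel"
  shows "obs_pos \<alpha> \<psi> xO yO t = (xO, yO) + (LINT s:{0..t}|lborel. (\<alpha> * cos (\<psi> s), \<alpha> * sin (\<psi> s)))"
proof -
  note int = set_integrable_heading[OF assms, of 0 t \<alpha>, unfolded set_integrable_def]
  show ?thesis
    unfolding obs_pos_def obs_x_def obs_y_def set_lebesgue_integral_def
    using integral_fst[OF int, symmetric] integral_snd[OF int, symmetric]
    by (simp add: prod_eq_iff)
qed

lemma dist_obs_pos_le:
  assumes \<psi>: "\<psi> \<in> borel_measurable lborel" and "0 \<le> \<alpha>" "0 \<le> t" "t \<le> t'"
  shows "dist (obs_pos \<alpha> \<psi> xO yO t) (obs_pos \<alpha> \<psi> xO yO t') \<le> \<alpha> * (t' - t)"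
proof -
  define v where "v s = (\<alpha> * cos (\<psi> s), \<alpha> * sin (\<psi> s))" for s
  have int: "set_integrable lborel {t<..t'} v"
    unfolding v_def
    by (rule set_integrable_subset[OF set_integrable_heading[OF \<psi>, of t t']]) auto
  have "(LINT s:{0..t'}|lborel. v s) = (LINT s:{0..t}|lborel. v s) + (LINT s:{t<..t'}|lborel. v s)"
  proof -
    have "{0..t'} = {0..t} \<union> {t<..t'}" using assms by auto
    moreover have "set_integrable lborel {0..t} v"
      unfolding v_def by (rule set_integrable_heading[OF \<psi>])
    moreover have "{0..t} \<inter> {t<..t'} = {}" by auto
    ultimately show ?thesis
      using int by (simp add: set_integral_Un)
  qed
  then have "obs_pos \<alpha> \<psi> xO yO t' - obs_pos \<alpha> \<psi> xO yO t = (LINT s:{t<..t'}|lborel. v s)"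
    unfolding obs_pos_integral[OF \<psi>] v_def by simp
  then have "dist (obs_pos \<alpha> \<psi> xO yO t) (obs_pos \<alpha> \<psi> xO yO t') = norm (LINT s:{t<..t'}|lborel. v s)"
    by (metis dist_commute dist_norm)
  also have "\<dots> \<le> (LINT s:{t<..t'}|lborel. norm (v s))"
    by (rule set_integral_norm_bound[OF int])
  also have "\<dots> = \<alpha> * (t' - t)"
    using assms by (simp add: v_def set_integral_const)
  finally show ?thesis .
qed

lemma target_outruns_observer:
  assumes \<psi>: "\<psi> \<in> borel_measurable lborel" and "0 \<le> \<alpha>" "0 \<le> u" "u \<le> w"
  shows "(1 - \<alpha>) * (w - u) \<le>
    dist (obs_pos \<alpha> \<psi> xO yO u) (target_pos yT u) + dist (obs_pos \<alpha> \<psi> xO yO w) (target_pos yT w)"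
proof -
  let ?P = "obs_pos \<alpha> \<psi> xO yO" and ?T = "target_pos yT"
  have "w - u = dist (?T u) (?T w)"
    using assms by (simp add: dist_target_pos)
  also have "\<dots> \<le> dist (?T u) (?P u) + dist (?P u) (?P w) + dist (?P w) (?T w)"
    using dist_triangle[of "?T u" "?T w" "?P u"] dist_triangle[of "?P u" "?T w" "?P w"] by linarith
  also have "\<dots> \<le> dist (?P u) (?T u) + \<alpha> * (w - u) + dist (?P w) (?T w)"
    using dist_obs_pos_le[OF assms] by (simp add: dist_commute)
  finally show ?thesis by (simp add: algebra_simps)
qed

lemma t_obs_le:
  fixes \<psi> :: "real \<Rightarrow> real"
  assumes \<psi>: "\<psi> \<in> borel_measurable lborel" and "0 \<le> \<alpha>" "\<alpha> < 1" "0 \<le> R"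
  shows "t_obs \<alpha> R \<psi> xO yO yT \<le> 2 * R / (1 - \<alpha>)"
proof -
  define S where "S = {t. 0 \<le> t \<and> sqdist_OT \<alpha> \<psi> xO yO yT t \<le> R\<^sup>2}"
  define t2 where "t2 = t2_time \<alpha> R \<psi> xO yO yT"
  define tf where "tf = tf_time \<alpha> R \<psi> xO yO yT"
  define B where "B = 2 * R / (1 - \<alpha>)"
  have "0 \<le> B" using assms unfolding B_def by simp
  have "bdd_below S" unfolding S_def bdd_below_def by auto
  show ?thesis
  proof (cases "S = {}")
    case True
    with \<open>0 \<le> B\<close> show ?thesis unfolding t_obs_def S_def B_def by simp
  next
    case False
    \<comment> \<open>Uses only that no exit time lies below \<open>tf\<close>; so it also holds when there is no
      exit time at all and \<open>tf = Inf {}\<close> is unspecified.\<close>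
    have inside: "sqdist_OT \<alpha> \<psi> xO yO yT w \<le> R\<^sup>2" if "t2 \<le> w" "w < tf" for w
    proof (rule ccontr)
      assume "\<not> ?thesis"
      with that have "tf \<le> w"
        unfolding tf_def tf_time_def t2_def[symmetric] by (intro cInf_lower) (auto simp: bdd_below_def)
      with \<open>w < tf\<close> show False by simp
    qed
    have tf_bound: "tf - B \<le> u" if "u \<in> S" for u
    proof (cases "tf \<le> u")
      case True with \<open>0 \<le> B\<close> show ?thesis by simp
    next
      case False
      have "t2 \<le> u"
        using that \<open>bdd_below S\<close> unfolding t2_def t2_time_def S_def[symmetric] by (rule cInf_lower)
      have window: "w \<le> u + B" if "u < w" "w < tf" for w
      proof -
        have "(1 - \<alpha>) * (w - u) \<le> 2 * R"
          using target_outruns_observer[OF \<psi> \<open>0 \<le> \<alpha>\<close>, of u w xO yO yT] \<open>u \<in> S\<close> inside[of w] that \<open>t2 \<le> u\<close>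
          unfolding S_def by (simp add: sqdist_OT_le_iff[OF \<open>0 \<le> R\<close>])
        with assms show ?thesis unfolding B_def by (simp add: field_simps)
      qed
      from False have "u < tf" by simp
      then have "tf \<le> u + B" using window by (rule dense_le_bounded)
      then show ?thesis by simp
    qed
    have "tf - B \<le> t2"
      unfolding t2_def t2_time_def S_def[symmetric] using False tf_bound by (rule cInf_greatest)
    moreover have "t_obs \<alpha> R \<psi> xO yO yT = tf - t2"
      using False unfolding t_obs_def S_def[symmetric] t2_def[symmetric] tf_def[symmetric] by simp
    ultimately show ?thesis unfolding B_def by simp
  qed
qed

lemma obs_pos_const_heading:
  assumes "0 \<le> t"
  shows "obs_pos \<alpha> (\<lambda>_. \<theta>) xO yO t = (xO, yO) + (\<alpha> * t) *\<^sub>R (cos \<theta>, sin \<theta>)"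
  using assms by (simp add: obs_pos_def obs_x_def obs_y_def set_integral_const)

lemma dist_const_heading_target:
  assumes "0 \<le> t"
  shows "dist (obs_pos \<alpha> (\<lambda>_. \<theta>) xO yO t) (target_pos yT t) =
    norm ((xO, yO - yT) + t *\<^sub>R (\<alpha> * cos \<theta>, \<alpha> * sin \<theta> - 1))"
  using assms by (simp add: obs_pos_const_heading target_pos_def dist_norm algebra_simps)

lemma norm_affine_le_between:
  fixes a b :: "'a::real_normed_vector"
  assumes "s \<le> t" "t \<le> w" "norm (a + s *\<^sub>R b) \<le> r" "norm (a + w *\<^sub>R b) \<le> r"
  shows "norm (a + t *\<^sub>R b) \<le> r"
proof (cases "s = w")
  case True
  with assms show ?thesis by (metis order_antisym)
next
  case False
  have "(w - s) * norm (a + t *\<^sub>R b) = norm ((w - s) *\<^sub>R (a + t *\<^sub>R b))"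
    using assms(1,2) by simp
  also have "(w - s) *\<^sub>R (a + t *\<^sub>R b) = (w - t) *\<^sub>R (a + s *\<^sub>R b) + (t - s) *\<^sub>R (a + w *\<^sub>R b)"
    by (simp add: algebra_simps)
  also have "norm \<dots> \<le> (w - t) * norm (a + s *\<^sub>R b) + (t - s) * norm (a + w *\<^sub>R b)"
    using assms(1,2) norm_triangle_ineq[of "(w - t) *\<^sub>R (a + s *\<^sub>R b)" "(t - s) *\<^sub>R (a + w *\<^sub>R b)"]
    by simp
  also have "\<dots> \<le> (w - t) * r + (t - s) * r"
    using assms by (intro add_mono mult_left_mono) auto
  also have "\<dots> = (w - s) * r"
    by (simp add: algebra_simps)
  finally show ?thesis
    using assms(1,2) False by simp
qed

lemma norm_affine_lt_imp_le_after:
  fixes a b :: "'a::real_normed_vector"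
  assumes "norm (a + t *\<^sub>R b) < r"
  shows "\<exists>t'>t. norm (a + t' *\<^sub>R b) \<le> r"
proof -
  define \<delta> where "\<delta> = (r - norm (a + t *\<^sub>R b)) / (norm b + 1)"
  have "0 < norm b + 1" by (simp add: add_nonneg_pos)
  then have "0 < \<delta>" and \<delta>_mult: "\<delta> * (norm b + 1) = r - norm (a + t *\<^sub>R b)"
    using assms unfolding \<delta>_def by simp_all
  have "norm (a + (t + \<delta>) *\<^sub>R b) = norm ((a + t *\<^sub>R b) + \<delta> *\<^sub>R b)"
    by (simp add: algebra_simps)
  also have "\<dots> \<le> norm (a + t *\<^sub>R b) + \<delta> * norm b"
    using norm_triangle_ineq[of "a + t *\<^sub>R b" "\<delta> *\<^sub>R b"] \<open>0 < \<delta>\<close> by simp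
  also have "\<dots> \<le> r" using \<delta>_mult \<open>0 < \<delta>\<close> by (simp add: algebra_simps)
  finally show ?thesis using \<open>0 < \<delta>\<close> by (intro exI[where x = "t + \<delta>"]) simp
qed

lemma observer_eventually_outside:
  assumes \<psi>: "\<psi> \<in> borel_measurable lborel" and "0 \<le> \<alpha>" "\<alpha> < 1" "0 \<le> R" "0 \<le> t"
  shows "\<exists>w\<ge>t. R < dist (obs_pos \<alpha> \<psi> xO yO w) (target_pos yT w)"
proof -
  define d where "d t = dist (obs_pos \<alpha> \<psi> xO yO t) (target_pos yT t)" for t
  define w where "w = t + (R + d 0 + 1) / (1 - \<alpha>)"
  have "t \<le> w" unfolding w_def using assms by (simp add: d_def)
  have "(1 - \<alpha>) * (w - 0) = (1 - \<alpha>) * t + (R + d 0 + 1)"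
    using assms unfolding w_def by (simp add: field_simps)
  then have "R + d 0 + 1 \<le> (1 - \<alpha>) * (w - 0)"
    using assms by simp
  also have "\<dots> \<le> d 0 + d w"
    unfolding d_def using \<open>t \<le> w\<close> assms by (intro target_outruns_observer) auto
  finally show ?thesis using \<open>t \<le> w\<close> unfolding d_def by (intro exI[where x = w]) auto
qed

lemma t_obs_const_heading_pos:
  assumes "0 \<le> \<alpha>" "\<alpha> < 1" "0 \<le> t1"
    and inside: "dist (obs_pos \<alpha> (\<lambda>_. \<theta>) xO yO t1) (target_pos yT t1) < R"
  shows "0 < t_obs \<alpha> R (\<lambda>_. \<theta>) xO yO yT"
proof -
  define a where "a = (xO, yO - yT)"
  define b where "b = (\<alpha> * cos \<theta>, \<alpha> * sin \<theta> - 1)"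
  define d where "d t = dist (obs_pos \<alpha> (\<lambda>_. \<theta>) xO yO t) (target_pos yT t)" for t
  have d_eq: "d t = norm (a + t *\<^sub>R b)" if "0 \<le> t" for t
    unfolding d_def a_def b_def using that by (rule dist_const_heading_target)
  have "0 \<le> R" using inside zero_le_dist[of "obs_pos \<alpha> (\<lambda>_. \<theta>) xO yO t1" "target_pos yT t1"] by linarith
  have sq_iff: "sqdist_OT \<alpha> (\<lambda>_. \<theta>) xO yO yT t \<le> R\<^sup>2 \<longleftrightarrow> d t \<le> R" for t
    unfolding d_def by (rule sqdist_OT_le_iff[OF \<open>0 \<le> R\<close>])
  define S where "S = {t. 0 \<le> t \<and> sqdist_OT \<alpha> (\<lambda>_. \<theta>) xO yO yT t \<le> R\<^sup>2}"
  have S_eq: "S = {t. 0 \<le> t \<and> norm (a + t *\<^sub>R b) \<le> R}"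
    unfolding S_def sq_iff using d_eq by auto
  have "t1 \<in> S" using assms d_eq unfolding S_eq d_def by auto
  have "bdd_below S" unfolding S_eq bdd_below_def by auto
  define t2 where "t2 = Inf S"
  have "t2 \<in> S"
    unfolding t2_def by (rule closed_contains_Inf)
      (use \<open>t1 \<in> S\<close> \<open>bdd_below S\<close> in \<open>auto simp: S_eq intro!: closed_Collect_conj closed_Collect_le continuous_intros\<close>)
  have "t2 \<le> t1" unfolding t2_def using \<open>t1 \<in> S\<close> \<open>bdd_below S\<close> by (rule cInf_lower)
  obtain t3 where "t1 < t3" "norm (a + t3 *\<^sub>R b) \<le> R"
    using norm_affine_lt_imp_le_after[of a t1 b R] inside d_eq[OF \<open>0 \<le> t1\<close>] unfolding d_def by auto
  define Tset where
    "Tset = {t. t2_time \<alpha> R (\<lambda>_. \<theta>) xO yO yT \<le> t \<and> sqdist_OT \<alpha> (\<lambda>_. \<theta>) xO yO yT t > R\<^sup>2}"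
  have t2_time_eq: "t2_time \<alpha> R (\<lambda>_. \<theta>) xO yO yT = t2" unfolding t2_time_def t2_def S_def ..
  obtain w where "t1 \<le> w" "R < d w"
    using observer_eventually_outside[OF _ assms(1,2) \<open>0 \<le> R\<close> \<open>0 \<le> t1\<close>,
        where \<psi> = "\<lambda>_. \<theta>" and xO = xO and yO = yO and yT = yT]
    unfolding d_def by auto
  then have "w \<in> Tset" unfolding Tset_def t2_time_eq using sq_iff[of w] \<open>t2 \<le> t1\<close> by simp
  have "t3 \<le> x" if "x \<in> Tset" for x
  proof (rule ccontr)
    assume "\<not> t3 \<le> x"
    moreover have "t2 \<le> x" and "R < d x" using that sq_iff[of x] unfolding Tset_def t2_time_eq by auto
    moreover have "0 \<le> t2" and "norm (a + t2 *\<^sub>R b) \<le> R" using \<open>t2 \<in> S\<close> unfolding S_eq by auto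
    ultimately show False
      using norm_affine_le_between[of t2 x t3 a b R] \<open>norm (a + t3 *\<^sub>R b) \<le> R\<close> d_eq[of x] by simp
  qed
  then have "t3 \<le> tf_time \<alpha> R (\<lambda>_. \<theta>) xO yO yT"
    unfolding tf_time_def Tset_def[symmetric] using \<open>w \<in> Tset\<close> by (intro cInf_greatest) auto
  moreover have "t_obs \<alpha> R (\<lambda>_. \<theta>) xO yO yT = tf_time \<alpha> R (\<lambda>_. \<theta>) xO yO yT - t2"
    using \<open>t1 \<in> S\<close> unfolding t_obs_def S_def[symmetric] t2_time_eq by auto
  ultimately show ?thesis using \<open>t2 \<le> t1\<close> \<open>t1 < t3\<close> by simp
qed

lemma polar_form_Pair:
  fixes v :: "real \<times> real"
  shows "\<exists>\<theta>::real. v = norm v *\<^sub>R (cos \<theta>, sin \<theta>)"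
proof (cases "v = 0")
  case True then show ?thesis by (simp add: zero_prod_def)
next
  case False
  define e where "e = v /\<^sub>R norm v"
  have "norm e = 1" using False by (simp add: e_def)
  then have "(fst e)\<^sup>2 + (snd e)\<^sup>2 = 1" by (cases e) (simp add: norm_Pair)
  then obtain \<theta> where "fst e = cos \<theta>" "snd e = sin \<theta>"
    using sincos_total_2pi by blast
  then have "e = (cos \<theta>, sin \<theta>)" by (simp add: prod_eq_iff)
  moreover have "v = norm v *\<^sub>R e" using False by (simp add: e_def)
  ultimately show ?thesis by metis
qed

lemma exists_const_heading_inside:
  assumes "0 \<le> \<alpha>" "0 < R" "0 \<le> t0" and close: "dist (xO, yO) (target_pos yT t0) < \<alpha> * t0 + R"
  shows "\<exists>\<theta> t1. 0 \<le> t1 \<and> dist (obs_pos \<alpha> (\<lambda>_. \<theta>) xO yO t1) (target_pos yT t1) < R"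
proof -
  define D where "D t = dist (xO, yO) (target_pos yT t)" for t
  obtain t1 where "0 \<le> t1" "\<alpha> * t1 \<le> D t1" "D t1 < \<alpha> * t1 + R"
  proof (cases "\<alpha> * t0 \<le> D t0")
    case True
    with assms show ?thesis using that unfolding D_def by blast
  next
    case False
    have "continuous_on {0..t0} (\<lambda>t. D t - \<alpha> * t)"
      unfolding D_def target_pos_def by (intro continuous_intros)
    then obtain t1 where "0 \<le> t1" "t1 \<le> t0" "D t1 - \<alpha> * t1 = 0"
      using IVT2'[of "\<lambda>t. D t - \<alpha> * t" t0 0 0] False \<open>0 \<le> t0\<close> by (auto simp: D_def)
    with \<open>0 < R\<close> show ?thesis using that by simp
  qed
  obtain \<theta> where \<theta>: "target_pos yT t1 - (xO, yO) = D t1 *\<^sub>R (cos \<theta>, sin \<theta>)"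
    using polar_form_Pair[of "target_pos yT t1 - (xO, yO)"] unfolding D_def dist_norm norm_minus_commute by blast
  have "target_pos yT t1 - obs_pos \<alpha> (\<lambda>_. \<theta>) xO yO t1 = (D t1 - \<alpha> * t1) *\<^sub>R (cos \<theta>, sin \<theta>)"
    using \<theta> \<open>0 \<le> t1\<close> by (simp add: obs_pos_const_heading algebra_simps)
  then have "dist (obs_pos \<alpha> (\<lambda>_. \<theta>) xO yO t1) (target_pos yT t1) = D t1 - \<alpha> * t1"
    using \<open>\<alpha> * t1 \<le> D t1\<close> by (simp add: dist_commute dist_norm)
  with \<open>0 \<le> t1\<close> \<open>D t1 < \<alpha> * t1 + R\<close> show ?thesis
    by (intro exI[where x = \<theta>] exI[where x = t1]) simp
qed

text \<open>For \<open>Z\<close> on the Decision Line, \<open>target_pos yT (tangency_time \<alpha> yT Z)\<close> is the point where the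
  Apollonius circle \<open>{P. |P Z| = \<alpha> |P T|}\<close> touches the target's path.\<close>

definition tangency_time :: "real \<Rightarrow> real \<Rightarrow> real \<times> real \<Rightarrow> real" where
  "tangency_time \<alpha> yT Z = (snd Z - yT) / (1 - \<alpha>\<^sup>2)"

lemma decision_line_tangency:
  assumes "Z \<in> decision_line \<alpha> yT" "0 \<le> \<alpha>" "\<alpha> < 1"
  shows "0 \<le> tangency_time \<alpha> yT Z"
    and "dist Z (target_pos yT (tangency_time \<alpha> yT Z)) = \<alpha> * tangency_time \<alpha> yT Z"
proof -
  define c where "c = sqrt (1 - \<alpha>\<^sup>2)"
  have "\<alpha>\<^sup>2 < 1" using assms by (simp add: abs_square_less_1)
  then have c2: "c\<^sup>2 = 1 - \<alpha>\<^sup>2" and "0 < c" unfolding c_def by simp_all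
  obtain s x where Z: "Z = (x, yT + s * c)" "0 \<le> s" "x = s * \<alpha> \<or> x = - (s * \<alpha>)"
    using assms(1) unfolding decision_line_def c_def by auto
  have u: "tangency_time \<alpha> yT Z = s / c"
    using \<open>0 < c\<close> unfolding tangency_time_def Z(1) c2[symmetric] by (simp add: power2_eq_square)
  then show "0 \<le> tangency_time \<alpha> yT Z" using Z(2) \<open>0 < c\<close> by simp
  have "yT + s * c - (yT + s / c) = s * (c\<^sup>2 - 1) / c"
    using \<open>0 < c\<close> by (simp add: field_simps power2_eq_square)
  then have "yT + s * c - (yT + s / c) = - (s * \<alpha>\<^sup>2 / c)"
    using c2 by simp
  then have "(dist Z (target_pos yT (s / c)))\<^sup>2 = (s * \<alpha>)\<^sup>2 + (s * \<alpha>\<^sup>2 / c)\<^sup>2"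
    using Z(3) unfolding Z(1) target_pos_def dist_Pair_Pair_power2 by auto
  also have "\<dots> = (\<alpha> * (s / c))\<^sup>2 * (c\<^sup>2 + \<alpha>\<^sup>2)"
    using \<open>0 < c\<close> by (simp add: field_simps power2_eq_square)
  also have "\<dots> = (\<alpha> * (s / c))\<^sup>2"
    using c2 by simp
  finally show "dist Z (target_pos yT (tangency_time \<alpha> yT Z)) = \<alpha> * tangency_time \<alpha> yT Z"
    unfolding u using assms(2) Z(2) \<open>0 < c\<close> by (simp add: power2_eq_iff_nonneg)
qed

lemma decision_line_point_on_circle:
  assumes far: "\<forall>t\<ge>0. \<alpha> * t + R \<le> dist P (target_pos yT t)"
    and "Z \<in> decision_line \<alpha> yT" "dist Z P = R" "0 \<le> \<alpha>" "\<alpha> < 1" "0 < R"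
  defines "u \<equiv> tangency_time \<alpha> yT Z"
  shows "0 \<le> u"
    and "dist P (target_pos yT u) = \<alpha> * u + R"
    and "Z = ((\<alpha> * u) *\<^sub>R P + R *\<^sub>R target_pos yT u) /\<^sub>R (\<alpha> * u + R)"
proof -
  let ?T = "target_pos yT u"
  show "0 \<le> u"
    using decision_line_tangency(1)[OF assms(2,4,5)] unfolding u_def .
  have dZ: "dist Z ?T = \<alpha> * u"
    using decision_line_tangency(2)[OF assms(2,4,5)] unfolding u_def .
  have "dist P ?T \<le> dist P Z + dist Z ?T" by (rule dist_triangle)
  moreover have "\<alpha> * u + R \<le> dist P ?T" using far \<open>0 \<le> u\<close> by simp
  ultimately show eq: "dist P ?T = \<alpha> * u + R"
    using dZ \<open>dist Z P = R\<close> by (simp add: dist_commute)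
  have "norm ((Z - P) + (?T - Z)) = norm (Z - P) + norm (?T - Z)"
    using eq dZ \<open>dist Z P = R\<close> by (simp add: dist_norm norm_minus_commute)
  then have "R *\<^sub>R (?T - Z) = (\<alpha> * u) *\<^sub>R (Z - P)"
    unfolding norm_triangle_eq using dZ \<open>dist Z P = R\<close> by (simp add: dist_norm norm_minus_commute)
  then have "(\<alpha> * u + R) *\<^sub>R Z = (\<alpha> * u) *\<^sub>R P + R *\<^sub>R ?T"
    by (simp add: algebra_simps)
  moreover have "0 < \<alpha> * u + R" using \<open>0 \<le> u\<close> \<open>0 \<le> \<alpha>\<close> \<open>0 < R\<close> by (simp add: add_nonneg_pos)
  ultimately show "Z = ((\<alpha> * u) *\<^sub>R P + R *\<^sub>R ?T) /\<^sub>R (\<alpha> * u + R)"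
    by (metis divideR_right less_irrefl)
qed

lemma nonneg_quadratic_zeros_eq:
  fixes k b c u v :: real
  assumes "0 < k" and nonneg: "\<forall>t\<ge>0. 0 \<le> k * t\<^sup>2 + b * t + c"
    and "k * u\<^sup>2 + b * u + c = 0" "k * v\<^sup>2 + b * v + c = 0" "0 \<le> u" "0 \<le> v"
  shows "u = v"
proof -
  define m where "m = (u + v) / 2"
  have "k * m\<^sup>2 + b * m + c = ((k * u\<^sup>2 + b * u + c) + (k * v\<^sup>2 + b * v + c)) / 2 - k * (u - v)\<^sup>2 / 4"
    unfolding m_def by (simp add: field_simps power2_eq_square)
  also have "\<dots> = - (k * (u - v)\<^sup>2 / 4)" using assms by simp
  finally have "0 \<le> - (k * (u - v)\<^sup>2 / 4)"
    using nonneg assms unfolding m_def by (metis add_nonneg_nonneg divide_nonneg_pos zero_less_numeral)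
  with \<open>0 < k\<close> show ?thesis by (simp add: mult_le_0_iff)
qed

lemma mem_obs_circle_iff:
  assumes "0 \<le> R"
  shows "Z \<in> obs_circle R xO yO \<longleftrightarrow> dist Z (xO, yO) = R"
proof -
  have "Z \<in> obs_circle R xO yO \<longleftrightarrow> (dist Z (xO, yO))\<^sup>2 = R\<^sup>2"
    by (cases Z) (simp add: obs_circle_def dist_Pair_Pair_power2)
  also have "\<dots> \<longleftrightarrow> dist Z (xO, yO) = R"
    using assms by (simp add: power2_eq_iff_nonneg)
  finally show ?thesis .
qed

lemma card_obs_circle_decision_line_eq_2_imp_close:
  assumes "0 \<le> \<alpha>" "\<alpha> < 1" "0 < R"
    and two: "card (obs_circle R xO yO \<inter> decision_line \<alpha> yT) = 2"
  shows "\<exists>t\<ge>0. dist (xO, yO) (target_pos yT t) < \<alpha> * t + R"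
proof (rule ccontr)
  assume "\<not> ?thesis"
  then have far: "\<forall>t\<ge>0. \<alpha> * t + R \<le> dist (xO, yO) (target_pos yT t)" by (auto simp: not_less)
  define F where "F t = (1 - \<alpha>\<^sup>2) * t\<^sup>2 + (- 2 * (yO - yT + \<alpha> * R)) * t + (xO\<^sup>2 + (yO - yT)\<^sup>2 - R\<^sup>2)" for t
  have F_eq: "F t = (dist (xO, yO) (target_pos yT t))\<^sup>2 - (\<alpha> * t + R)\<^sup>2" for t
    unfolding F_def target_pos_def dist_Pair_Pair_power2 by (simp add: power2_eq_square algebra_simps)
  have F_nonneg: "\<forall>t\<ge>0. 0 \<le> F t"
    using far assms by (auto simp: F_eq intro!: power_mono)
  obtain Z1 Z2 where Zs: "obs_circle R xO yO \<inter> decision_line \<alpha> yT = {Z1, Z2}" "Z1 \<noteq> Z2"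
    using two by (auto simp: card_2_iff)
  have on_circle: "dist Z (xO, yO) = R" "Z \<in> decision_line \<alpha> yT" if "Z \<in> {Z1, Z2}" for Z
    using that Zs(1) mem_obs_circle_iff[of R Z xO yO] \<open>0 < R\<close> by auto
  note point = decision_line_point_on_circle[OF far on_circle(2) on_circle(1) assms(1-3)]
  define u1 where "u1 = tangency_time \<alpha> yT Z1"
  define u2 where "u2 = tangency_time \<alpha> yT Z2"
  have "u1 \<noteq> u2"
    using point(3)[of Z1] point(3)[of Z2] Zs(2) unfolding u1_def u2_def by auto
  moreover have "u1 = u2"
  proof (rule nonneg_quadratic_zeros_eq[of "1 - \<alpha>\<^sup>2"])
    show "0 < 1 - \<alpha>\<^sup>2" using assms by (simp add: abs_square_less_1)
    show "\<forall>t\<ge>0. 0 \<le> (1 - \<alpha>\<^sup>2) * t\<^sup>2 + (- 2 * (yO - yT + \<alpha> * R)) * t + (xO\<^sup>2 + (yO - yT)\<^sup>2 - R\<^sup>2)"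
      using F_nonneg unfolding F_def .
    show "(1 - \<alpha>\<^sup>2) * u1\<^sup>2 + (- 2 * (yO - yT + \<alpha> * R)) * u1 + (xO\<^sup>2 + (yO - yT)\<^sup>2 - R\<^sup>2) = 0"
      using point(2)[of Z1] F_eq[of u1] unfolding F_def u1_def by simp
    show "(1 - \<alpha>\<^sup>2) * u2\<^sup>2 + (- 2 * (yO - yT + \<alpha> * R)) * u2 + (xO\<^sup>2 + (yO - yT)\<^sup>2 - R\<^sup>2) = 0"
      using point(2)[of Z2] F_eq[of u2] unfolding F_def u2_def by simp
    show "0 \<le> u1" "0 \<le> u2" using point(1)[of Z1] point(1)[of Z2] unfolding u1_def u2_def by simp_all
  qed
  ultimately show False by contradiction
qed

lemma t_obs_le_opt_obs:
  assumes "\<psi> \<in> borel_measurable lborel" "0 \<le> \<alpha>" "\<alpha> < 1" "0 \<le> R"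
  shows "t_obs \<alpha> R \<psi> xO yO yT \<le> opt_obs \<alpha> R xO yO yT"
  unfolding opt_obs_def
proof (rule cSup_upper)
  show "t_obs \<alpha> R \<psi> xO yO yT \<in> {t_obs \<alpha> R \<psi> xO yO yT | \<psi>. \<psi> \<in> borel_measurable lborel}"
    using assms(1) by blast
  show "bdd_above {t_obs \<alpha> R \<psi> xO yO yT | \<psi>. \<psi> \<in> borel_measurable lborel}"
    using t_obs_le[OF _ assms(2-4)] by (intro bdd_aboveI[where M = "2 * R / (1 - \<alpha>)"]) auto
qed

lemma opt_obs_le:
  assumes "0 \<le> \<alpha>" "\<alpha> < 1" "0 \<le> R"
  shows "opt_obs \<alpha> R xO yO yT \<le> 2 * R / (1 - \<alpha>)"
  unfolding opt_obs_def
proof (rule cSup_least)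
  have "(\<lambda>_. 0) \<in> borel_measurable lborel" by simp
  then show "{t_obs \<alpha> R \<psi> xO yO yT | \<psi>. \<psi> \<in> borel_measurable lborel} \<noteq> {}" by blast
qed (use t_obs_le[OF _ assms] in auto)

theorem lemma9:
  fixes \<alpha> R xO yO yT :: real
  assumes "0 < \<alpha>" and "\<alpha> < 1" and "0 < R"
    and "card (obs_circle R xO yO \<inter> decision_line \<alpha> yT) = 2"
  shows "(xO, yO, yT) \<in> B2 \<alpha> R \<union> B3 \<alpha> R \<and> opt_obs \<alpha> R xO yO yT \<noteq> 0"
proof -
  have "0 \<le> \<alpha>" "0 \<le> R" using assms by simp_all
  obtain t0 where "0 \<le> t0" "dist (xO, yO) (target_pos yT t0) < \<alpha> * t0 + R"
    using card_obs_circle_decision_line_eq_2_imp_close[OF \<open>0 \<le> \<alpha>\<close> assms(2-4)] by blast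
  then obtain \<theta> t1 where "0 \<le> t1" "dist (obs_pos \<alpha> (\<lambda>_. \<theta>) xO yO t1) (target_pos yT t1) < R"
    using exists_const_heading_inside[OF \<open>0 \<le> \<alpha>\<close> \<open>0 < R\<close>] by blast
  then have "0 < t_obs \<alpha> R (\<lambda>_. \<theta>) xO yO yT"
    using t_obs_const_heading_pos[OF \<open>0 \<le> \<alpha>\<close> \<open>\<alpha> < 1\<close>] by blast
  also have "\<dots> \<le> opt_obs \<alpha> R xO yO yT"
    using \<open>0 \<le> \<alpha>\<close> \<open>\<alpha> < 1\<close> \<open>0 \<le> R\<close> by (intro t_obs_le_opt_obs) auto
  finally have "0 < opt_obs \<alpha> R xO yO yT" .
  moreover have "opt_obs \<alpha> R xO yO yT \<le> 2 * R / (1 - \<alpha>)"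
    using \<open>0 \<le> \<alpha>\<close> \<open>\<alpha> < 1\<close> \<open>0 \<le> R\<close> by (rule opt_obs_le)
  ultimately show ?thesis unfolding B2_def B3_def by auto
qed

end
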